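(* Let $m\geq 1$. Every nonempty clopen subset of ${}^m\mathbb{A}$ is homeomorphic to ${}^m\mathbb{A}$.
   Context: Let $\mathbb{A}_0=\,]0,1]\times\{0\}$, $\mathbb{A}_1=[0,1[\,\times\{1\}$ and $\mathbb{A}=\mathbb{A}_0\cup\mathbb{A}_1$, ordered lexicographically: $\langle a,r\rangle\prec\langle b,s\rangle$ iff $a<b$, or $a=b$ and $r<s$; $\mathbb{A}$ (the double arrow space) carries the order topology, and ${}^m\mathbb{A}$ is its $m$-th power with the product topology. *)

theory Defs
  imports "HOL-Analysis.Analysis"
begin

definition double_arrow :: "(real \<times> real) set" where
  "double_arrow = ({0<..1} \<times> {0}) \<union> ({0..<1} \<times> {1})"

definition lex_less :: "real \<times> real \<Rightarrow> real \<times> real \<Rightarrow> bool" where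
  "lex_less p q \<longleftrightarrow> fst p < fst q \<or> (fst p = fst q \<and> snd p < snd q)"

definition double_arrow_topology :: "(real \<times> real) topology" where
  "double_arrow_topology = topology_generated_by
     (insert double_arrow
       ((\<lambda>a. {y \<in> double_arrow. lex_less y a}) ` double_arrow \<union>
        (\<lambda>a. {y \<in> double_arrow. lex_less a y}) ` double_arrow))"

definition double_arrow_power :: "nat \<Rightarrow> (nat \<Rightarrow> real \<times> real) topology" where
  "double_arrow_power m = product_topology (\<lambda>i. double_arrow_topology) {..<m}"

end

theory Submission
  imports Defs
begin

(* Both for the double arrow space A and for its power A^m = Z, the clopen sets admit a base B
   that is a semiring of sets and whose nonempty members are all homeomorphic to Z: for A the
   intervals [<c,1>, <d,0>], which are affine copies of A; for A^m the products of clopen subsets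
   of A, which by the case m = 1 are products of copies of A. A clopen set S is compact, hence a
   finite union of members of B, and the semiring structure refines this union to a finite
   disjoint union of nonempty members. Finally Z is the union of two disjoint clopen copies of
   itself (cut the first coordinate at 1/2), so the union of two disjoint closed copies of Z is
   again a copy of Z, and induction on the number of pieces shows that S is homeomorphic to Z. *)

section \<open>Gluing copies of a space\<close>

lemma continuous_map_cases_closed_Un:
  assumes "closedin X U" "closedin X V" "disjnt U V"
    and "continuous_map (subtopology X U) (subtopology Y P) f"
    and "continuous_map (subtopology X V) (subtopology Y Q) f'"
  shows "continuous_map (subtopology X (U \<union> V)) (subtopology Y (P \<union> Q))
           (\<lambda>x. if x \<in> U then f x else f' x)"
proof (rule pasting_lemma_closed[where I="{True, False}" and T="\<lambda>b. if b then U else V"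
      and f="\<lambda>b. if b then f else f'"])
  show "continuous_map (subtopology (subtopology X (U \<union> V)) (if b then U else V))
          (subtopology Y (P \<union> Q)) (if b then f else f')" for b
    using assms by (auto simp: subtopology_subtopology Int_absorb1 continuous_map_in_subtopology)
qed (use assms in \<open>auto simp: closedin_subset_topspace disjnt_iff\<close>)

lemma homeomorphic_maps_closed_Un:
  assumes "closedin X U" "closedin X V" "disjnt U V"
    and "closedin Y P" "closedin Y Q" "disjnt P Q"
    and fg: "homeomorphic_maps (subtopology X U) (subtopology Y P) f g"
    and fg': "homeomorphic_maps (subtopology X V) (subtopology Y Q) f' g'"
  shows "homeomorphic_maps (subtopology X (U \<union> V)) (subtopology Y (P \<union> Q))
           (\<lambda>x. if x \<in> U then f x else f' x) (\<lambda>y. if y \<in> P then g y else g' y)"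
proof -
  have "U \<subseteq> topspace X" "V \<subseteq> topspace X" "P \<subseteq> topspace Y" "Q \<subseteq> topspace Y"
    using assms closedin_subset by auto
  then have maps: "f \<in> U \<rightarrow> P" "g \<in> P \<rightarrow> U" "f' \<in> V \<rightarrow> Q" "g' \<in> Q \<rightarrow> V"
    using fg fg' by (auto simp: homeomorphic_maps_def continuous_map_def Int_absorb1)
  show ?thesis
    using fg fg' maps assms(3,6) \<open>U \<subseteq> topspace X\<close> \<open>V \<subseteq> topspace X\<close>
      \<open>P \<subseteq> topspace Y\<close> \<open>Q \<subseteq> topspace Y\<close>
    unfolding homeomorphic_maps_def
    by (auto simp: disjnt_iff Int_absorb1 intro!: continuous_map_cases_closed_Un assms(1,2,4,5))
qed

definition splits_into_two_copies :: "'a topology \<Rightarrow> bool" where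
  "splits_into_two_copies Z \<longleftrightarrow>
     (\<exists>P Q. closedin Z P \<and> closedin Z Q \<and> disjnt P Q \<and> P \<union> Q = topspace Z \<and>
        subtopology Z P homeomorphic_space Z \<and> subtopology Z Q homeomorphic_space Z)"

lemma homeomorphic_space_closed_Un_of_copies:
  assumes "splits_into_two_copies Z"
    and "closedin X U" "closedin X V" "disjnt U V"
    and "subtopology X U homeomorphic_space Z" "subtopology X V homeomorphic_space Z"
  shows "subtopology X (U \<union> V) homeomorphic_space Z"
proof -
  obtain P Q where PQ: "closedin Z P" "closedin Z Q" "disjnt P Q" "P \<union> Q = topspace Z"
    and hP: "subtopology Z P homeomorphic_space Z" and hQ: "subtopology Z Q homeomorphic_space Z"
    using assms(1) unfolding splits_into_two_copies_def by blast
  have "subtopology X U homeomorphic_space subtopology Z P"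
    using assms(5) hP homeomorphic_space_sym homeomorphic_space_trans by blast
  moreover have "subtopology X V homeomorphic_space subtopology Z Q"
    using assms(6) hQ homeomorphic_space_sym homeomorphic_space_trans by blast
  ultimately have "subtopology X (U \<union> V) homeomorphic_space subtopology Z (P \<union> Q)"
    using homeomorphic_maps_closed_Un[OF assms(2-4) PQ(1-3)]
    unfolding homeomorphic_space_def by blast
  then show ?thesis
    using PQ(4) by simp
qed

lemma homeomorphic_space_disjoint_Union_of_copies:
  assumes Z: "splits_into_two_copies Z"
    and "finite \<C>" "\<C> \<noteq> {}" "disjoint \<C>"
    and "\<And>C. C \<in> \<C> \<Longrightarrow> closedin X C \<and> subtopology X C homeomorphic_space Z"
  shows "subtopology X (\<Union>\<C>) homeomorphic_space Z"
  using assms(2-5)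
proof (induction \<C> rule: finite_ne_induct)
  case (insert C \<C>)
  have "disjnt C (\<Union>\<C>)"
    using insert.hyps(3) insert.prems(1) by (auto simp: disjnt_def pairwise_def)
  moreover have "closedin X (\<Union>\<C>)"
    using insert.hyps(1) insert.prems(2) by (intro closedin_Union) auto
  moreover have "subtopology X (\<Union>\<C>) homeomorphic_space Z"
    using insert.IH insert.prems by (simp add: pairwise_insert)
  ultimately show ?case
    using insert.prems(2)[of C] by (auto intro: homeomorphic_space_closed_Un_of_copies[OF Z])
qed simp

lemma (in semiring_of_sets) finite_Union_eq_disjoint_Union:
  assumes "finite \<F>" "\<F> \<subseteq> M"
  obtains \<C> where "finite \<C>" "disjoint \<C>" "\<C> \<subseteq> M" "{} \<notin> \<C>" "\<Union>\<C> = \<Union>\<F>"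
proof -
  interpret R: ring_of_sets \<Omega> generated_ring
    by (rule generating_ring)
  have "\<Union>\<F> \<in> generated_ring"
    using assms generated_ringI_Basic by (intro R.finite_Union) auto
  then obtain \<C> where "finite \<C>" "disjoint \<C>" "\<C> \<subseteq> M" "\<Union>\<F> = \<Union>\<C>"
    by (rule generated_ringE)
  then show thesis
    by (intro that[of "\<C> - {{}}"]) (auto simp: pairwise_def)
qed

lemma clopen_homeomorphic_space_of_clopen_base:
  assumes "compact_space X" "semiring_of_sets \<Omega> \<B>"
    and clopen: "\<And>B. B \<in> \<B> \<Longrightarrow> openin X B \<and> closedin X B"
    and copies: "\<And>B. B \<in> \<B> \<Longrightarrow> B \<noteq> {} \<Longrightarrow> subtopology X B homeomorphic_space Z"
    and base: "\<And>U x. openin X U \<Longrightarrow> x \<in> U \<Longrightarrow> \<exists>B\<in>\<B>. x \<in> B \<and> B \<subseteq> U"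
    and Z: "splits_into_two_copies Z"
    and S: "openin X S" "closedin X S" "S \<noteq> {}"
  shows "subtopology X S homeomorphic_space Z"
proof -
  interpret semiring_of_sets \<Omega> \<B> by fact
  have "compactin X S"
    using assms(1) S(2) by (rule closedin_compact_space)
  moreover have "S \<subseteq> \<Union>{B \<in> \<B>. B \<subseteq> S}"
    using base[OF S(1)] by blast
  ultimately obtain \<F> where "finite \<F>" "\<F> \<subseteq> {B \<in> \<B>. B \<subseteq> S}" "S \<subseteq> \<Union>\<F>"
    using clopen unfolding compactin_def by (metis (no_types, lifting) mem_Collect_eq)
  then have "finite \<F>" "\<F> \<subseteq> \<B>" "\<Union>\<F> = S"
    by auto
  then obtain \<C> where \<C>: "finite \<C>" "disjoint \<C>" "\<C> \<subseteq> \<B>" "{} \<notin> \<C>" "\<Union>\<C> = S"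
    by (metis finite_Union_eq_disjoint_Union)
  have "subtopology X (\<Union>\<C>) homeomorphic_space Z"
    using \<C> S(3) clopen copies by (intro homeomorphic_space_disjoint_Union_of_copies[OF Z]) auto
  then show ?thesis
    using \<C>(5) by simp
qed

section \<open>Clopen boxes in finite products\<close>

lemma continuous_map_product_topology_map:
  assumes "\<And>i. i \<in> I \<Longrightarrow> continuous_map (X i) (Y i) (f i)"
  shows "continuous_map (product_topology X I) (product_topology Y I) (\<lambda>x. \<lambda>i\<in>I. f i (x i))"
  unfolding continuous_map_componentwise
  using assms by (auto intro: continuous_map_compose[OF continuous_map_product_projection, unfolded o_def])

lemma homeomorphic_space_product_topology:
  assumes "\<And>i. i \<in> I \<Longrightarrow> X i homeomorphic_space Y i"
  shows "product_topology X I homeomorphic_space product_topology Y I"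
proof -
  obtain f g where fg: "\<And>i. i \<in> I \<Longrightarrow> homeomorphic_maps (X i) (Y i) (f i) (g i)"
    using assms unfolding homeomorphic_space_def by metis
  have "homeomorphic_maps (product_topology X I) (product_topology Y I)
          (\<lambda>x. \<lambda>i\<in>I. f i (x i)) (\<lambda>y. \<lambda>i\<in>I. g i (y i))"
    unfolding homeomorphic_maps_def
  proof (intro conjI ballI continuous_map_product_topology_map)
    show "(\<lambda>i\<in>I. g i ((\<lambda>i\<in>I. f i (x i)) i)) = x" if "x \<in> topspace (product_topology X I)" for x
      using that fg by (force simp: PiE_iff homeomorphic_maps_def extensional_def)
    show "(\<lambda>i\<in>I. f i ((\<lambda>i\<in>I. g i (y i)) i)) = y" if "y \<in> topspace (product_topology Y I)" for y
      using that fg by (force simp: PiE_iff homeomorphic_maps_def extensional_def)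
  qed (use fg in \<open>auto simp: homeomorphic_maps_def\<close>)
  then show ?thesis
    unfolding homeomorphic_space_def by blast
qed

lemma splits_into_two_copies_product_topology:
  assumes "k \<in> I" "splits_into_two_copies (X k)"
  shows "splits_into_two_copies (product_topology X I)"
proof -
  obtain P Q where PQ: "closedin (X k) P" "closedin (X k) Q" "disjnt P Q" "P \<union> Q = topspace (X k)"
    and hP: "subtopology (X k) P homeomorphic_space X k"
    and hQ: "subtopology (X k) Q homeomorphic_space X k"
    using assms(2) unfolding splits_into_two_copies_def by blast
  define slab where "slab R = PiE I ((\<lambda>i. topspace (X i))(k := R))" for R
  have closed: "closedin (product_topology X I) (slab R)" if "closedin (X k) R" for R
    using that by (auto simp: slab_def closedin_product_topology)
  have copy: "subtopology (product_topology X I) (slab R) homeomorphic_space product_topology X I"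
    if "subtopology (X k) R homeomorphic_space X k" for R
    unfolding slab_def subtopology_product_topology
    using that by (intro homeomorphic_space_product_topology) auto
  have "disjnt (slab P) (slab Q)"
    using PQ(3) assms(1) by (auto simp: slab_def disjnt_iff PiE_iff)
  moreover have "slab P \<union> slab Q = topspace (product_topology X I)"
    using PQ(4) assms(1) by (auto simp: slab_def PiE_iff split: if_splits) (metis Un_iff)+
  ultimately show ?thesis
    unfolding splits_into_two_copies_def using closed copy PQ hP hQ by blast
qed

lemma PiE_lessThan_Diff:
  fixes m :: "'a::wellorder"
  shows "PiE {..<m} F - PiE {..<m} G =
     (\<Union>k<m. PiE {..<m} (\<lambda>i. if i < k then F i \<inter> G i else if i = k then F i - G i else F i))"
proof (intro equalityI subsetI)
  fix x assume x: "x \<in> PiE {..<m} F - PiE {..<m} G"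
  then have "\<exists>k. k < m \<and> x k \<notin> G k"
    by (auto simp: PiE_iff)
  then obtain k where "k < m" "x k \<notin> G k" "\<forall>i<k. \<not> (i < m \<and> x i \<notin> G i)"
    unfolding exists_least_iff[of "\<lambda>k. k < m \<and> x k \<notin> G k"] by blast
  then have "x \<in> PiE {..<m} (\<lambda>i. if i < k then F i \<inter> G i else if i = k then F i - G i else F i)"
    using x unfolding PiE_iff by (auto simp: extensional_def)
  then show "x \<in> (\<Union>k<m. PiE {..<m} (\<lambda>i. if i < k then F i \<inter> G i else if i = k then F i - G i else F i))"
    using \<open>k < m\<close> by blast
next
  fix x assume "x \<in> (\<Union>k<m. PiE {..<m} (\<lambda>i. if i < k then F i \<inter> G i else if i = k then F i - G i else F i))"
  then obtain k where "k < m"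
    and x: "x \<in> PiE {..<m} (\<lambda>i. if i < k then F i \<inter> G i else if i = k then F i - G i else F i)"
    by blast
  have "x i \<in> F i" if "i < m" for i
    using PiE_mem[OF x, of i] that by (auto split: if_splits)
  moreover have "x k \<notin> G k"
    using PiE_mem[OF x, of k] \<open>k < m\<close> by simp
  ultimately show "x \<in> PiE {..<m} F - PiE {..<m} G"
    using x \<open>k < m\<close> by (auto simp: PiE_iff)
qed

lemma disjoint_family_on_PiE_lessThan_Diff:
  fixes m :: "'a::linorder"
  shows "disjoint_family_on
     (\<lambda>k. PiE {..<m} (\<lambda>i. if i < k then F i \<inter> G i else if i = k then F i - G i else F i)) {..<m}"
  unfolding disjoint_family_on_def
proof (intro ballI impI)
  fix k k' assume "k \<in> {..<m}" "k' \<in> {..<m}" "k \<noteq> k'"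
  then show "PiE {..<m} (\<lambda>i. if i < k then F i \<inter> G i else if i = k then F i - G i else F i) \<inter>
             PiE {..<m} (\<lambda>i. if i < k' then F i \<inter> G i else if i = k' then F i - G i else F i) = {}"
    by (auto simp: PiE_iff neq_iff) (metis DiffD2 IntD2 lessThan_iff less_irrefl)+
qed

definition clopen_boxes :: "(nat \<Rightarrow> 'a topology) \<Rightarrow> nat \<Rightarrow> (nat \<Rightarrow> 'a) set set" where
  "clopen_boxes X m = {PiE {..<m} F | F. \<forall>i<m. openin (X i) (F i) \<and> closedin (X i) (F i)}"

lemma semiring_of_sets_clopen_boxes:
  assumes "0 < m"
  shows "semiring_of_sets (topspace (product_topology X {..<m})) (clopen_boxes X m)"
proof
  show "clopen_boxes X m \<subseteq> Pow (topspace (product_topology X {..<m}))"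
    by (auto simp: clopen_boxes_def PiE_iff dest: openin_subset)
  have "PiE {..<m} (\<lambda>_. {}) = {}"
    using assms by (simp add: PiE_eq_empty_iff)
  then show "{} \<in> clopen_boxes X m"
    unfolding clopen_boxes_def by (auto intro!: exI[of _ "\<lambda>_. {}"])
  fix A B assume "A \<in> clopen_boxes X m" "B \<in> clopen_boxes X m"
  then obtain F G where A: "A = PiE {..<m} F" and B: "B = PiE {..<m} G"
    and F: "\<forall>i<m. openin (X i) (F i) \<and> closedin (X i) (F i)"
    and G: "\<forall>i<m. openin (X i) (G i) \<and> closedin (X i) (G i)"
    unfolding clopen_boxes_def by blast
  show "A \<inter> B \<in> clopen_boxes X m"
    using F G unfolding A B PiE_Int clopen_boxes_def by blast
  define C where
    "C k = PiE {..<m} (\<lambda>i. if i < k then F i \<inter> G i else if i = k then F i - G i else F i)" for k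
  have "C k \<in> clopen_boxes X m" for k
  proof -
    have "\<forall>i<m. openin (X i) (if i < k then F i \<inter> G i else if i = k then F i - G i else F i) \<and>
                closedin (X i) (if i < k then F i \<inter> G i else if i = k then F i - G i else F i)"
      using F G by auto
    then show ?thesis
      unfolding C_def clopen_boxes_def by blast
  qed
  moreover have "disjoint (C ` {..<m})"
    unfolding C_def by (intro disjoint_family_on_disjoint_image disjoint_family_on_PiE_lessThan_Diff)
  moreover have "A - B = \<Union>(C ` {..<m})"
    unfolding A B C_def by (rule PiE_lessThan_Diff)
  ultimately show "\<exists>\<C>\<subseteq>clopen_boxes X m. finite \<C> \<and> disjoint \<C> \<and> A - B = \<Union>\<C>"
    by (intro exI[of _ "C ` {..<m}"]) auto
qed

lemma clopen_boxes_clopen: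
  assumes "B \<in> clopen_boxes X m"
  shows "openin (product_topology X {..<m}) B \<and> closedin (product_topology X {..<m}) B"
  using assms by (auto simp: clopen_boxes_def openin_PiE_gen closedin_product_topology)

lemma clopen_boxes_base:
  assumes "openin (product_topology X {..<m}) U" "x \<in> U"
    and zero_dim: "\<And>i U x. i < m \<Longrightarrow> openin (X i) U \<Longrightarrow> x \<in> U \<Longrightarrow>
      \<exists>W. openin (X i) W \<and> closedin (X i) W \<and> x \<in> W \<and> W \<subseteq> U"
  shows "\<exists>B\<in>clopen_boxes X m. x \<in> B \<and> B \<subseteq> U"
proof -
  obtain V where V: "\<forall>i\<in>{..<m}. openin (X i) (V i)" "x \<in> PiE {..<m} V" "PiE {..<m} V \<subseteq> U"
    using assms(1,2) unfolding openin_product_topology_alt by blast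
  then have "\<forall>i<m. \<exists>W. openin (X i) W \<and> closedin (X i) W \<and> x i \<in> W \<and> W \<subseteq> V i"
    using zero_dim by (auto simp: PiE_iff)
  then obtain W where W: "\<forall>i<m. openin (X i) (W i) \<and> closedin (X i) (W i) \<and> x i \<in> W i \<and> W i \<subseteq> V i"
    by metis
  have "PiE {..<m} W \<in> clopen_boxes X m"
    using W unfolding clopen_boxes_def by blast
  moreover have "x \<in> PiE {..<m} W"
    using V(2) W by (auto simp: PiE_iff)
  moreover have "PiE {..<m} W \<subseteq> U"
    using V(3) W PiE_mono[of "{..<m}" W V] by auto
  ultimately show ?thesis
    by blast
qed

lemma homeomorphic_space_clopen_box:
  assumes "B \<in> clopen_boxes X m" "B \<noteq> {}"
    and "\<And>i F. i < m \<Longrightarrow> openin (X i) F \<Longrightarrow> closedin (X i) F \<Longrightarrow> F \<noteq> {} \<Longrightarrow>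
      subtopology (X i) F homeomorphic_space Y i"
  shows "subtopology (product_topology X {..<m}) B homeomorphic_space product_topology Y {..<m}"
proof -
  obtain F where B: "B = PiE {..<m} F" and F: "\<forall>i<m. openin (X i) (F i) \<and> closedin (X i) (F i)"
    using assms(1) unfolding clopen_boxes_def by blast
  have "\<forall>i<m. F i \<noteq> {}"
    using assms(2) unfolding B by (simp add: PiE_eq_empty_iff)
  then show ?thesis
    unfolding B subtopology_product_topology
    using F assms(3) by (intro homeomorphic_space_product_topology) auto
qed

section \<open>The double arrow space\<close>

(* The order interval [<c,1>, <d,0>] = ]<c,0>, <d,1>[ of the double arrow space. *)
definition arrow_interval :: "real \<Rightarrow> real \<Rightarrow> (real \<times> real) set" where
  "arrow_interval c d = ({c<..d} \<times> {0}) \<union> ({c..<d} \<times> {1})"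

lemma mem_arrow_interval [simp]:
  "(x, r) \<in> arrow_interval c d \<longleftrightarrow> r = 0 \<and> c < x \<and> x \<le> d \<or> r = 1 \<and> c \<le> x \<and> x < d"
  by (auto simp: arrow_interval_def)

lemma double_arrow_eq_arrow_interval: "double_arrow = arrow_interval 0 1"
  by (auto simp: arrow_interval_def double_arrow_def)

lemma arrow_interval_Int: "arrow_interval a b \<inter> arrow_interval c d = arrow_interval (max a c) (min b d)"
  by (auto simp: arrow_interval_def)

lemma arrow_interval_eq_empty: "b \<le> a \<Longrightarrow> arrow_interval a b = {}"
  by (auto simp: arrow_interval_def)

lemma arrow_interval_subset_double_arrow: "0 \<le> c \<Longrightarrow> d \<le> 1 \<Longrightarrow> arrow_interval c d \<subseteq> double_arrow"
  by (auto simp: arrow_interval_def double_arrow_def)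

lemma arrow_interval_Diff:
  "c < d \<Longrightarrow> arrow_interval a b - arrow_interval c d = arrow_interval a (min b c) \<union> arrow_interval (max a d) b"
  by (auto simp: arrow_interval_def)

lemma arrow_interval_subset_Un:
  "c \<le> t \<Longrightarrow> arrow_interval a d \<subseteq> arrow_interval a t \<union> arrow_interval c d"
  by (auto simp: arrow_interval_def)

lemma double_arrow_Diff_arrow_interval:
  assumes "0 \<le> c" "d \<le> 1"
  shows "double_arrow - arrow_interval c d = arrow_interval 0 (min c 1) \<union> arrow_interval (max d 0) 1"
proof (intro set_eqI)
  fix p :: "real \<times> real"
  show "p \<in> double_arrow - arrow_interval c d \<longleftrightarrow> p \<in> arrow_interval 0 (min c 1) \<union> arrow_interval (max d 0) 1"
    using assms by (cases p) (auto simp: double_arrow_eq_arrow_interval)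
qed

lemma topspace_double_arrow_topology [simp]: "topspace double_arrow_topology = double_arrow"
  by (auto simp: double_arrow_topology_def)

lemma arrow_interval_below:
  assumes "q \<in> double_arrow" "x \<in> double_arrow" "lex_less x q"
  shows "\<exists>d\<le>1. x \<in> arrow_interval 0 d \<and> arrow_interval 0 d \<subseteq> {y \<in> double_arrow. lex_less y q}"
proof -
  obtain t r e s where "x = (t, r)" "q = (e, s)"
    by fastforce
  then show ?thesis
    using assms
    by (cases "t < e"; intro exI[of _ "if t < e then (t + e) / 2 else e"])
      (auto simp: double_arrow_def lex_less_def)
qed

lemma arrow_interval_above:
  assumes "q \<in> double_arrow" "x \<in> double_arrow" "lex_less q x"
  shows "\<exists>c\<ge>0. x \<in> arrow_interval c 1 \<and> arrow_interval c 1 \<subseteq> {y \<in> double_arrow. lex_less q y}"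
proof -
  obtain t r e s where "x = (t, r)" "q = (e, s)"
    by fastforce
  then show ?thesis
    using assms
    by (cases "e < t"; intro exI[of _ "if e < t then (t + e) / 2 else e"])
      (auto simp: double_arrow_def lex_less_def)
qed

lemma openin_arrow_interval:
  assumes "0 \<le> c" "d \<le> 1"
  shows "openin double_arrow_topology (arrow_interval c d)"
proof -
  have basic: "openin double_arrow_topology S"
    if "S = double_arrow \<or> (\<exists>q\<in>double_arrow. S = {y \<in> double_arrow. lex_less y q} \<or>
                                                S = {y \<in> double_arrow. lex_less q y})" for S
    unfolding double_arrow_topology_def
    by (rule topology_generated_by_Basis) (use that in blast)
  then have whole: "openin double_arrow_topology (arrow_interval 0 1)"
    by (simp flip: double_arrow_eq_arrow_interval)
  have lower: "openin double_arrow_topology (arrow_interval 0 d)"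
  proof -
    consider "d \<le> 0" | "d = 1" | "0 < d" "d < 1"
      using assms(2) by linarith
    then show ?thesis
    proof cases
      case 3
      have "arrow_interval 0 d = {y \<in> double_arrow. lex_less y (d, 1)}"
      proof (intro set_eqI)
        fix p :: "real \<times> real"
        show "p \<in> arrow_interval 0 d \<longleftrightarrow> p \<in> {y \<in> double_arrow. lex_less y (d, 1)}"
          using 3 by (cases p) (auto simp: double_arrow_def lex_less_def)
      qed
      moreover have "(d, 1) \<in> double_arrow"
        using 3 by (simp add: double_arrow_def)
      ultimately show ?thesis
        by (intro basic disjI2 bexI[of _ "(d, 1)"] disjI1)
    qed (simp_all add: arrow_interval_eq_empty whole)
  qed
  have upper: "openin double_arrow_topology (arrow_interval c 1)"
  proof -
    consider "1 \<le> c" | "c = 0" | "0 < c" "c < 1"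
      using assms(1) by linarith
    then show ?thesis
    proof cases
      case 3
      have "arrow_interval c 1 = {y \<in> double_arrow. lex_less (c, 0) y}"
      proof (intro set_eqI)
        fix p :: "real \<times> real"
        show "p \<in> arrow_interval c 1 \<longleftrightarrow> p \<in> {y \<in> double_arrow. lex_less (c, 0) y}"
          using 3 by (cases p) (auto simp: double_arrow_def lex_less_def)
      qed
      moreover have "(c, 0) \<in> double_arrow"
        using 3 by (simp add: double_arrow_def)
      ultimately show ?thesis
        by (intro basic disjI2 bexI[of _ "(c, 0)"] disjI2)
    qed (simp_all add: arrow_interval_eq_empty whole)
  qed
  have "arrow_interval c d = arrow_interval c 1 \<inter> arrow_interval 0 d"
    using assms by (simp add: arrow_interval_Int)
  then show ?thesis
    using lower upper by (simp add: openin_Int)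
qed

lemma closedin_arrow_interval:
  assumes "0 \<le> c" "d \<le> 1"
  shows "closedin double_arrow_topology (arrow_interval c d)"
  unfolding closedin_def topspace_double_arrow_topology double_arrow_Diff_arrow_interval[OF assms]
  using assms by (auto simp: arrow_interval_subset_double_arrow intro!: openin_Un openin_arrow_interval)

lemma openin_double_arrow_topology_iff:
  "openin double_arrow_topology U \<longleftrightarrow> U \<subseteq> double_arrow \<and>
     (\<forall>x\<in>U. \<exists>c d. 0 \<le> c \<and> d \<le> 1 \<and> x \<in> arrow_interval c d \<and> arrow_interval c d \<subseteq> U)"
  (is "_ \<longleftrightarrow> ?local U")
proof
  assume "openin double_arrow_topology U"
  then have "generate_topology_on (insert double_arrow
       ((\<lambda>a. {y \<in> double_arrow. lex_less y a}) ` double_arrow \<union>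
        (\<lambda>a. {y \<in> double_arrow. lex_less a y}) ` double_arrow)) U"
    unfolding double_arrow_topology_def by (rule openin_topology_generated_by)
  then show "?local U"
  proof induction
    case (Int U V)
    show ?case
    proof (intro conjI ballI)
      fix x assume "x \<in> U \<inter> V"
      then obtain c d c' d' where "0 \<le> c" "d \<le> 1" "x \<in> arrow_interval c d" "arrow_interval c d \<subseteq> U"
        "0 \<le> c'" "d' \<le> 1" "x \<in> arrow_interval c' d'" "arrow_interval c' d' \<subseteq> V"
        using Int.IH by blast
      then show "\<exists>c d. 0 \<le> c \<and> d \<le> 1 \<and> x \<in> arrow_interval c d \<and> arrow_interval c d \<subseteq> U \<inter> V"
        by (intro exI[of _ "max c c'"] exI[of _ "min d d'"]) (auto simp flip: arrow_interval_Int)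
    qed (use Int.IH in blast)
  next
    case (UN K)
    show ?case
    proof (intro conjI ballI)
      fix x assume "x \<in> \<Union>K"
      then obtain U c d where "U \<in> K" "0 \<le> c" "d \<le> 1" "x \<in> arrow_interval c d" "arrow_interval c d \<subseteq> U"
        using UN.IH by blast
      then show "\<exists>c d. 0 \<le> c \<and> d \<le> 1 \<and> x \<in> arrow_interval c d \<and> arrow_interval c d \<subseteq> \<Union>K"
        by blast
    qed (use UN.IH in blast)
  next
    case (Basis S)
    then show ?case
    proof (elim insertE UnE imageE)
      assume "S = double_arrow"
      then show ?thesis
        by (metis double_arrow_eq_arrow_interval order.refl zero_le_one)
    next
      fix q assume "S = {y \<in> double_arrow. lex_less y q}" "q \<in> double_arrow"
      then show ?thesis
        using arrow_interval_below[of q] by (metis (no_types, lifting) mem_Collect_eq order.refl subsetI)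
    next
      fix q assume "S = {y \<in> double_arrow. lex_less q y}" "q \<in> double_arrow"
      then show ?thesis
        using arrow_interval_above[of q] by (metis (no_types, lifting) mem_Collect_eq order.refl subsetI)
    qed
  qed simp
next
  assume local: "?local U"
  show "openin double_arrow_topology U"
  proof (subst openin_subopen, intro ballI)
    fix x assume "x \<in> U"
    then obtain c d where "0 \<le> c" "d \<le> 1" "x \<in> arrow_interval c d" "arrow_interval c d \<subseteq> U"
      using local by blast
    then show "\<exists>T. openin double_arrow_topology T \<and> x \<in> T \<and> T \<subseteq> U"
      using openin_arrow_interval by blast
  qed
qed

lemma continuous_map_into_double_arrow:
  assumes "f \<in> topspace X \<rightarrow> double_arrow"
    and "\<And>c d. 0 \<le> c \<Longrightarrow> d \<le> 1 \<Longrightarrow> openin X {x \<in> topspace X. f x \<in> arrow_interval c d}"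
  shows "continuous_map X double_arrow_topology f"
  unfolding continuous_map_def topspace_double_arrow_topology
proof (intro conjI allI impI assms(1))
  fix U assume "openin double_arrow_topology U"
  then have U: "\<forall>y\<in>U. \<exists>c d. 0 \<le> c \<and> d \<le> 1 \<and> y \<in> arrow_interval c d \<and> arrow_interval c d \<subseteq> U"
    by (simp add: openin_double_arrow_topology_iff)
  show "openin X {x \<in> topspace X. f x \<in> U}"
  proof (subst openin_subopen, intro ballI)
    fix x assume x: "x \<in> {x \<in> topspace X. f x \<in> U}"
    then obtain c d where "0 \<le> c" "d \<le> 1" "f x \<in> arrow_interval c d" "arrow_interval c d \<subseteq> U"
      using U by blast
    then show "\<exists>T. openin X T \<and> x \<in> T \<and> T \<subseteq> {x \<in> topspace X. f x \<in> U}"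
      using x assms(2)[of c d] by (intro exI[of _ "{x \<in> topspace X. f x \<in> arrow_interval c d}"]) auto
  qed
qed

lemma homeomorphic_space_arrow_interval:
  assumes "0 \<le> a" "a < b" "b \<le> 1"
  shows "subtopology double_arrow_topology (arrow_interval a b) homeomorphic_space double_arrow_topology"
proof -
  define \<phi> :: "real \<times> real \<Rightarrow> real \<times> real" where "\<phi> = (\<lambda>(x, r). ((x - a) / (b - a), r))"
  define \<psi> :: "real \<times> real \<Rightarrow> real \<times> real" where "\<psi> = (\<lambda>(x, r). (a + (b - a) * x, r))"
  have "0 < b - a"
    using assms by simp
  then have vimage_\<phi>: "\<phi> -` arrow_interval c d = arrow_interval (a + (b - a) * c) (a + (b - a) * d)"
    and vimage_\<psi>: "\<psi> -` arrow_interval c d = arrow_interval ((c - a) / (b - a)) ((d - a) / (b - a))" for c d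
    by (auto simp: \<phi>_def \<psi>_def arrow_interval_def field_simps)
  have sub: "arrow_interval a b \<subseteq> double_arrow"
    using assms by (simp add: arrow_interval_subset_double_arrow)
  have "continuous_map (subtopology double_arrow_topology (arrow_interval a b)) double_arrow_topology \<phi>"
  proof (rule continuous_map_into_double_arrow)
    show "\<phi> \<in> topspace (subtopology double_arrow_topology (arrow_interval a b)) \<rightarrow> double_arrow"
      using vimage_\<phi>[of 0 1] by (auto simp: double_arrow_eq_arrow_interval)
    fix c d :: real assume cd: "0 \<le> c" "d \<le> 1"
    have "(b - a) * d \<le> b - a"
      using cd assms by (intro mult_left_le) auto
    then have "a + (b - a) * d \<le> 1"
      using assms by linarith
    moreover have "0 \<le> a + (b - a) * c"
      using cd assms by simp
    moreover have "{x \<in> topspace (subtopology double_arrow_topology (arrow_interval a b)). \<phi> x \<in> arrow_interval c d}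
        = arrow_interval a b \<inter> arrow_interval (a + (b - a) * c) (a + (b - a) * d)"
      using sub vimage_\<phi>[of c d] by auto
    ultimately show "openin (subtopology double_arrow_topology (arrow_interval a b))
        {x \<in> topspace (subtopology double_arrow_topology (arrow_interval a b)). \<phi> x \<in> arrow_interval c d}"
      by (simp add: openin_subtopology_Int2 openin_arrow_interval)
  qed
  moreover have "continuous_map double_arrow_topology (subtopology double_arrow_topology (arrow_interval a b)) \<psi>"
    unfolding continuous_map_in_subtopology
  proof
    show "\<psi> \<in> topspace double_arrow_topology \<rightarrow> arrow_interval a b"
      using vimage_\<psi>[of a b] assms by (auto simp: double_arrow_eq_arrow_interval)
    show "continuous_map double_arrow_topology double_arrow_topology \<psi>"
    proof (rule continuous_map_into_double_arrow)
      show "\<psi> \<in> topspace double_arrow_topology \<rightarrow> double_arrow"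
        using \<open>\<psi> \<in> topspace double_arrow_topology \<rightarrow> arrow_interval a b\<close> sub by auto
      fix c d :: real
      have "{x \<in> topspace double_arrow_topology. \<psi> x \<in> arrow_interval c d}
          = arrow_interval (max 0 ((c - a) / (b - a))) (min 1 ((d - a) / (b - a)))"
        using vimage_\<psi>[of c d] by (auto simp flip: arrow_interval_Int simp: double_arrow_eq_arrow_interval)
      then show "openin double_arrow_topology {x \<in> topspace double_arrow_topology. \<psi> x \<in> arrow_interval c d}"
        by (simp add: openin_arrow_interval)
    qed
  qed
  moreover have "\<phi> (\<psi> p) = p" "\<psi> (\<phi> p) = p" for p
    using assms by (auto simp: \<phi>_def \<psi>_def field_simps split: prod.splits)
  ultimately show ?thesis
    unfolding homeomorphic_space_def homeomorphic_maps_def by metis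
qed

lemma compact_space_double_arrow: "compact_space double_arrow_topology"
  unfolding compact_space_alt topspace_double_arrow_topology
proof (intro allI impI)
  fix \<U> assume \<U>: "(\<forall>U\<in>\<U>. openin double_arrow_topology U) \<and> double_arrow \<subseteq> \<Union>\<U>"
  have cover: "\<exists>U\<in>\<U>. \<exists>c d. 0 \<le> c \<and> d \<le> 1 \<and> p \<in> arrow_interval c d \<and> arrow_interval c d \<subseteq> U"
    if p: "p \<in> double_arrow" for p
  proof -
    obtain U where "U \<in> \<U>" "p \<in> U"
      using \<U> p by blast
    moreover have "openin double_arrow_topology U"
      using \<U> \<open>U \<in> \<U>\<close> by blast
    ultimately show ?thesis
      unfolding openin_double_arrow_topology_iff by blast
  qed
  \<comment> \<open>Least upper bound argument, as for the compactness of a real interval.\<close>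
  define covered where "covered t \<longleftrightarrow> (\<exists>\<F>. finite \<F> \<and> \<F> \<subseteq> \<U> \<and> arrow_interval 0 t \<subseteq> \<Union>\<F>)" for t
  have covered_0: "covered 0"
    unfolding covered_def by (intro exI[of _ "{}"]) (simp add: arrow_interval_eq_empty)
  have covered_mono: "covered s" if "covered t" "s \<le> t" for s t
  proof -
    have "arrow_interval 0 s \<subseteq> arrow_interval 0 t"
      using that(2) by (auto simp: arrow_interval_def)
    then show ?thesis
      using that(1) unfolding covered_def by (meson subset_trans)
  qed
  have covered_step: "covered d"
    if t: "covered t" "c \<le> t" and U: "U \<in> \<U>" "arrow_interval c d \<subseteq> U" for t c d U
  proof -
    obtain \<F> where "finite \<F>" "\<F> \<subseteq> \<U>" "arrow_interval 0 t \<subseteq> \<Union>\<F>"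
      using t(1) unfolding covered_def by blast
    moreover have "arrow_interval 0 d \<subseteq> arrow_interval 0 t \<union> arrow_interval c d"
      using t(2) by (rule arrow_interval_subset_Un)
    ultimately have "finite (insert U \<F>)" "insert U \<F> \<subseteq> \<U>" "arrow_interval 0 d \<subseteq> \<Union>(insert U \<F>)"
      using U by auto
    then show ?thesis
      unfolding covered_def by blast
  qed
  define T where "T = {t. t \<le> 1 \<and> covered t}"
  define s where "s = Sup T"
  have "0 \<in> T" "bdd_above T"
    using covered_0 unfolding T_def bdd_above_def by auto
  then have "T \<noteq> {}"
    by blast
  have "0 \<le> s"
    unfolding s_def using \<open>0 \<in> T\<close> \<open>bdd_above T\<close> by (rule cSup_upper)
  have "s \<le> 1"
    unfolding s_def using \<open>T \<noteq> {}\<close> by (rule cSup_least) (simp add: T_def)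
  have "covered s"
  proof (cases "s = 0")
    case False
    then have "(s, 0) \<in> double_arrow"
      using \<open>0 \<le> s\<close> \<open>s \<le> 1\<close> by (simp add: double_arrow_def)
    then obtain U c d where "U \<in> \<U>" "(s, 0) \<in> arrow_interval c d" "arrow_interval c d \<subseteq> U"
      using cover by blast
    then have "c < s" "s \<le> d"
      by auto
    then obtain t where "t \<in> T" "c < t"
      using \<open>T \<noteq> {}\<close> unfolding s_def by (elim less_cSupE)
    then have "covered d"
      using covered_step[of t c U d] \<open>U \<in> \<U>\<close> \<open>arrow_interval c d \<subseteq> U\<close> by (simp add: T_def)
    then show "covered s"
      using covered_mono \<open>s \<le> d\<close> by blast
  qed (simp add: covered_0)
  have "s = 1"
  proof (rule ccontr)
    assume "s \<noteq> 1"
    then have "(s, 1) \<in> double_arrow"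
      using \<open>0 \<le> s\<close> \<open>s \<le> 1\<close> by (simp add: double_arrow_def)
    then obtain U c d where "U \<in> \<U>" "d \<le> 1" "(s, 1) \<in> arrow_interval c d" "arrow_interval c d \<subseteq> U"
      using cover by blast
    then have "c \<le> s" "s < d"
      by auto
    then have "d \<in> T"
      using covered_step[OF \<open>covered s\<close>] \<open>U \<in> \<U>\<close> \<open>arrow_interval c d \<subseteq> U\<close> \<open>d \<le> 1\<close>
      unfolding T_def by blast
    then have "d \<le> s"
      unfolding s_def using \<open>bdd_above T\<close> by (rule cSup_upper)
    then show False
      using \<open>s < d\<close> by simp
  qed
  then show "\<exists>\<F>. finite \<F> \<and> \<F> \<subseteq> \<U> \<and> double_arrow \<subseteq> \<Union>\<F>"
    using \<open>covered s\<close> unfolding covered_def double_arrow_eq_arrow_interval by blast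
qed

lemma semiring_of_sets_arrow_intervals:
  "semiring_of_sets double_arrow {arrow_interval c d | c d. 0 \<le> c \<and> d \<le> 1}"
  (is "semiring_of_sets _ ?M")
proof
  have mem: "arrow_interval c d \<in> ?M" if "0 \<le> c" "d \<le> 1" for c d
    using that by blast
  show "?M \<subseteq> Pow double_arrow"
    using arrow_interval_subset_double_arrow by blast
  show "{} \<in> ?M"
    using mem[of 1 1] by (simp add: arrow_interval_eq_empty)
  fix A B assume "A \<in> ?M" "B \<in> ?M"
  then obtain a a' b b' where A: "A = arrow_interval a a'" "0 \<le> a" "a' \<le> 1"
    and B: "B = arrow_interval b b'" "0 \<le> b" "b' \<le> 1"
    by blast
  show "A \<inter> B \<in> ?M"
    using A B mem[of "max a b" "min a' b'"] by (simp add: arrow_interval_Int)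
  show "\<exists>\<C>\<subseteq>?M. finite \<C> \<and> disjoint \<C> \<and> A - B = \<Union>\<C>"
  proof (cases "b < b'")
    case True
    let ?\<C> = "{arrow_interval a (min a' b), arrow_interval (max a b') a'}"
    have "arrow_interval a (min a' b) \<inter> arrow_interval (max a b') a' = {}"
      using True by (simp add: arrow_interval_Int arrow_interval_eq_empty)
    then have "disjoint ?\<C>"
      by (auto simp: pairwise_def disjnt_def)
    moreover have "A - B = \<Union>?\<C>"
      using True by (simp add: A B arrow_interval_Diff)
    moreover have "?\<C> \<subseteq> ?M"
      using A mem[of a "min a' b"] mem[of "max a b'" a'] by simp
    ultimately show ?thesis
      by (intro exI[of _ ?\<C>]) simp
  next
    case False
    then have "A - B = \<Union>{A}"
      by (simp add: B arrow_interval_eq_empty)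
    then show ?thesis
      using A mem[of a a'] by (intro exI[of _ "{A}"]) simp
  qed
qed

lemma splits_into_two_copies_double_arrow: "splits_into_two_copies double_arrow_topology"
  unfolding splits_into_two_copies_def
proof (intro exI conjI)
  show "closedin double_arrow_topology (arrow_interval 0 (1/2))"
    and "closedin double_arrow_topology (arrow_interval (1/2) 1)"
    by (simp_all add: closedin_arrow_interval)
  show "disjnt (arrow_interval 0 (1/2)) (arrow_interval (1/2) 1)"
    by (simp add: disjnt_def arrow_interval_Int arrow_interval_eq_empty)
  show "arrow_interval 0 (1/2) \<union> arrow_interval (1/2) 1 = topspace double_arrow_topology"
    by (auto simp: arrow_interval_def double_arrow_def)
  show "subtopology double_arrow_topology (arrow_interval 0 (1/2)) homeomorphic_space double_arrow_topology"
    and "subtopology double_arrow_topology (arrow_interval (1/2) 1) homeomorphic_space double_arrow_topology"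
    by (simp_all add: homeomorphic_space_arrow_interval)
qed

lemma clopen_double_arrow_homeomorphic:
  assumes "openin double_arrow_topology S" "closedin double_arrow_topology S" "S \<noteq> {}"
  shows "subtopology double_arrow_topology S homeomorphic_space double_arrow_topology"
proof (rule clopen_homeomorphic_space_of_clopen_base[OF compact_space_double_arrow
      semiring_of_sets_arrow_intervals _ _ _ splits_into_two_copies_double_arrow assms])
  fix B assume "B \<in> {arrow_interval c d | c d. 0 \<le> c \<and> d \<le> 1}"
  then obtain c d where B: "B = arrow_interval c d" "0 \<le> c" "d \<le> 1"
    by blast
  then show "openin double_arrow_topology B \<and> closedin double_arrow_topology B"
    by (simp add: openin_arrow_interval closedin_arrow_interval)
  assume "B \<noteq> {}"
  then have "c < d"
    using B(1) arrow_interval_eq_empty by force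
  then show "subtopology double_arrow_topology B homeomorphic_space double_arrow_topology"
    using B by (simp add: homeomorphic_space_arrow_interval)
next
  fix U x assume "openin double_arrow_topology U" "x \<in> U"
  then show "\<exists>B\<in>{arrow_interval c d | c d. 0 \<le> c \<and> d \<le> 1}. x \<in> B \<and> B \<subseteq> U"
    unfolding openin_double_arrow_topology_iff by blast
qed

lemma double_arrow_clopen_base:
  assumes "openin double_arrow_topology U" "x \<in> U"
  shows "\<exists>W. openin double_arrow_topology W \<and> closedin double_arrow_topology W \<and> x \<in> W \<and> W \<subseteq> U"
  using assms openin_arrow_interval closedin_arrow_interval
  unfolding openin_double_arrow_topology_iff by meson

theorem proposition3p2:
  fixes m :: nat and S :: "(nat \<Rightarrow> real \<times> real) set"
  assumes "m \<ge> 1"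
    and "openin (double_arrow_power m) S"
    and "closedin (double_arrow_power m) S"
    and "S \<noteq> {}"
  shows "subtopology (double_arrow_power m) S homeomorphic_space double_arrow_power m"
  unfolding double_arrow_power_def
proof (rule clopen_homeomorphic_space_of_clopen_base)
  show "compact_space (product_topology (\<lambda>i. double_arrow_topology) {..<m})"
    by (simp add: compact_space_product_topology compact_space_double_arrow)
  show "semiring_of_sets (topspace (product_topology (\<lambda>i. double_arrow_topology) {..<m}))
          (clopen_boxes (\<lambda>i. double_arrow_topology) m)"
    using assms(1) by (intro semiring_of_sets_clopen_boxes) simp
  fix B assume B: "B \<in> clopen_boxes (\<lambda>i. double_arrow_topology) m"
  then show "openin (product_topology (\<lambda>i. double_arrow_topology) {..<m}) B \<and>
             closedin (product_topology (\<lambda>i. double_arrow_topology) {..<m}) B"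
    by (rule clopen_boxes_clopen)
  assume "B \<noteq> {}"
  with B show "subtopology (product_topology (\<lambda>i. double_arrow_topology) {..<m}) B homeomorphic_space
                 product_topology (\<lambda>i. double_arrow_topology) {..<m}"
    by (rule homeomorphic_space_clopen_box) (rule clopen_double_arrow_homeomorphic)
next
  fix U x assume "openin (product_topology (\<lambda>i. double_arrow_topology) {..<m}) U" "x \<in> U"
  then show "\<exists>B\<in>clopen_boxes (\<lambda>i. double_arrow_topology) m. x \<in> B \<and> B \<subseteq> U"
    by (rule clopen_boxes_base) (rule double_arrow_clopen_base)
next
  show "splits_into_two_copies (product_topology (\<lambda>i. double_arrow_topology) {..<m})"
    using assms(1) splits_into_two_copies_double_arrow
    by (intro splits_into_two_copies_product_topology[of 0]) auto
qed (use assms in \<open>simp_all add: double_arrow_power_def\<close>)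

end
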